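(* Let $\kappa>0$ and $\tau=\inf\{m\ge0:r_m^2\le\kappa\}$. Then for every $m\ge0$, \[\|\widehat F^{(\tau)}-\widehat F^{(m)}\|_n^2\le\|\widehat F^{(m)}-f^*\|_n^2+2|c_m|+(\kappa-\|\varepsilon\|_n^2)\mathbf 1\{\tau<m\}+(\|\varepsilon\|_n^2+\Delta(r_\tau^2)-\kappa)\mathbf 1\{\tau>m\},\] where $\Delta(r_m^2)=r_{m-1}^2-r_m^2$.
   Context: Let $Y=f^*+\varepsilon\in\mathbb R^n$ with $f^*,\varepsilon\in\mathbb R^n$, and let $\mathbf X\in\mathbb R^{n\times p}$ have rank $n$ with columns $X^{(j)}$. $\langle a,b\rangle_n=n^{-1}\sum_ia_ib_i$, $\|\cdot\|_n$ its norm, $\|\varepsilon\|_n^2=n^{-1}\sum_i\varepsilon_i^2$. $\widehat\Pi_J$: $\langle\cdot,\cdot\rangle_n$-orthogonal projection onto $\mathrm{span}\{X^{(j)}:j\in J\}$. OMP: $\widehat F^{(0)}=0,\widehat J_0=\emptyset$, $\widehat j_{m+1}\in\arg\max_j|\langle Y-\widehat F^{(m)},X^{(j)}/\|X^{(j)}\|_n\rangle_n|$, $\widehat J_{m+1}=\widehat J_m\cup\{\widehat j_{m+1}\}$, $\widehat F^{(m+1)}=\widehat\Pi_{\widehat J_{m+1}}Y$; $\widehat\Pi_m=\widehat\Pi_{\widehat J_m}$; $r_m^2=\|Y-\widehat F^{(m)}\|_n^2$; cross term $c_m=\langle(I-\widehat\Pi_m)f^*,\varepsilon\rangle_n$. 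*)

theory Defs
  imports "HOL-Analysis.Analysis"
begin

definition ip_n :: "real^'n \<Rightarrow> real^'n \<Rightarrow> real" where
  "ip_n a b = (\<Sum>i\<in>UNIV. a$i * b$i) / real CARD('n)"

definition nrm_n :: "real^'n \<Rightarrow> real" where
  "nrm_n a = sqrt (ip_n a a)"

definition proj_n :: "(real^'n) set \<Rightarrow> real^'n \<Rightarrow> real^'n" where
  "proj_n S y = (THE z. z \<in> span S \<and> (\<forall>s\<in>span S. ip_n (y - z) s = 0))"

definition cols :: "real^'p^'n \<Rightarrow> 'p set \<Rightarrow> (real^'n) set" where
  "cols X J = (\<lambda>j. column j X) ` J"

text \<open>OMP: sel m is the index selected at step m+1, so J_m = sel ` {..<m}.\<close>
definition omp_J :: "(nat \<Rightarrow> 'p) \<Rightarrow> nat \<Rightarrow> 'p set" where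
  "omp_J sel m = sel ` {..<m}"

definition omp_F :: "real^'p^'n \<Rightarrow> real^'n \<Rightarrow> (nat \<Rightarrow> 'p) \<Rightarrow> nat \<Rightarrow> real^'n" where
  "omp_F X Y sel m = proj_n (cols X (omp_J sel m)) Y"

text \<open>sel is a valid OMP selection sequence (any argmax tie-breaking).\<close>
definition omp_sel :: "real^'p^'n \<Rightarrow> real^'n \<Rightarrow> (nat \<Rightarrow> 'p) \<Rightarrow> bool" where
  "omp_sel X Y sel \<longleftrightarrow> (\<forall>m k.
     \<bar>ip_n (Y - omp_F X Y sel m) (column k X /\<^sub>R nrm_n (column k X))\<bar>
     \<le> \<bar>ip_n (Y - omp_F X Y sel m) (column (sel m) X /\<^sub>R nrm_n (column (sel m) X))\<bar>)"

definition omp_r2 :: "real^'p^'n \<Rightarrow> real^'n \<Rightarrow> (nat \<Rightarrow> 'p) \<Rightarrow> nat \<Rightarrow> real" where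
  "omp_r2 X Y sel m = (nrm_n (Y - omp_F X Y sel m))\<^sup>2"

end

theory Submission
  imports Defs
begin

text \<open>
  The projections \<open>\<Pi>\<^sub>m\<close> are nested, so by Pythagoras
  \<open>\<parallel>F\<^sub>\<tau> - F\<^sub>m\<parallel>\<^sup>2 = \<bar>r\<^sub>\<tau>\<^sup>2 - r\<^sub>m\<^sup>2\<bar>\<close>, and minimality of \<open>\<tau>\<close> gives
  \<open>r\<^sub>\<tau>\<^sup>2 \<le> \<kappa> < r(\<tau> - 1)\<^sup>2\<close>. It remains to compare \<open>r\<^sub>m\<^sup>2\<close> with \<open>\<parallel>\<epsilon>\<parallel>\<^sup>2\<close>:
  splitting \<open>Y - F\<^sub>m = (I - \<Pi>\<^sub>m) f\<^sup>* + (I - \<Pi>\<^sub>m) \<epsilon>\<close> gives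
  \<open>r\<^sub>m\<^sup>2 = \<parallel>F\<^sub>m - f\<^sup>*\<parallel>\<^sup>2 + \<parallel>\<epsilon>\<parallel>\<^sup>2 + 2 c\<^sub>m - 2 \<parallel>\<Pi>\<^sub>m \<epsilon>\<parallel>\<^sup>2\<close> with
  \<open>\<parallel>\<Pi>\<^sub>m \<epsilon>\<parallel>\<^sup>2 \<le> \<parallel>F\<^sub>m - f\<^sup>*\<parallel>\<^sup>2\<close>, hence \<open>\<bar>r\<^sub>m\<^sup>2 - \<parallel>\<epsilon>\<parallel>\<^sup>2\<bar> \<le> \<parallel>F\<^sub>m - f\<^sup>*\<parallel>\<^sup>2 + 2\<bar>c\<^sub>m\<bar>\<close>.
  The stopping time \<open>\<tau>\<close> is finite because the columns span \<open>\<real>\<^sup>n\<close>: while the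
  residual is nonzero, OMP selects a column outside the span of the selected ones, so the
  residual vanishes after at most \<open>n\<close> steps.
\<close>

lemma ip_n_eq_inner: "ip_n (a::real^'n) b = (a \<bullet> b) / real CARD('n)"
  unfolding ip_n_def inner_vec_def by simp

lemma ip_n_eq_0_iff_orthogonal: "ip_n (a::real^'n) b = 0 \<longleftrightarrow> orthogonal a b"
  by (simp add: ip_n_eq_inner orthogonal_def)

lemma ip_n_commute: "ip_n (a::real^'n) b = ip_n b a"
  by (simp add: ip_n_eq_inner inner_commute)

lemma ip_n_add_left: "ip_n (a + b::real^'n) c = ip_n a c + ip_n b c"
  by (simp add: ip_n_eq_inner inner_add_left add_divide_distrib)

lemma ip_n_diff_left: "ip_n (a - b::real^'n) c = ip_n a c - ip_n b c"
  by (simp add: ip_n_eq_inner inner_diff_left diff_divide_distrib)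

lemma ip_n_add_right: "ip_n c (a + b::real^'n) = ip_n c a + ip_n c b"
  by (simp add: ip_n_eq_inner inner_add_right add_divide_distrib)

lemma ip_n_diff_right: "ip_n c (a - b::real^'n) = ip_n c a - ip_n c b"
  by (simp add: ip_n_eq_inner inner_diff_right diff_divide_distrib)

lemma nrm_n_power2: "(nrm_n (a::real^'n))\<^sup>2 = ip_n a a"
  unfolding nrm_n_def by (simp add: ip_n_eq_inner)

lemma nrm_n_eq_0_iff: "nrm_n (a::real^'n) = 0 \<longleftrightarrow> a = 0"
  unfolding nrm_n_def by (simp add: ip_n_eq_inner)

lemma nrm_n_minus_commute: "nrm_n (a - b::real^'n) = nrm_n (b - a)"
  unfolding nrm_n_def by (simp add: ip_n_eq_inner inner_diff_left inner_diff_right inner_commute)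

lemma nrm_n_pythagorean:
  "orthogonal a b \<Longrightarrow> (nrm_n (a + b::real^'n))\<^sup>2 = (nrm_n a)\<^sup>2 + (nrm_n b)\<^sup>2"
  by (simp add: nrm_n_power2 ip_n_add_left ip_n_add_right ip_n_commute ip_n_eq_0_iff_orthogonal)

lemma ex1_proj_n:
  "\<exists>!z. z \<in> span S \<and> (\<forall>s\<in>span S. ip_n ((y::real^'n) - z) s = 0)"
proof (rule ex_ex1I)
  obtain a b where "a \<in> span S" "\<And>w. w \<in> span S \<Longrightarrow> orthogonal b w" "y = a + b"
    using orthogonal_subspace_decomp_exists by blast
  then show "\<exists>z. z \<in> span S \<and> (\<forall>s\<in>span S. ip_n (y - z) s = 0)"
    by (auto simp: ip_n_eq_0_iff_orthogonal)
next
  fix z1 z2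
  assume z1: "z1 \<in> span S \<and> (\<forall>s\<in>span S. ip_n (y - z1) s = 0)"
    and z2: "z2 \<in> span S \<and> (\<forall>s\<in>span S. ip_n (y - z2) s = 0)"
  then have "z1 - z2 \<in> span S" by (simp add: span_diff)
  with z1 z2 have "ip_n (z1 - z2) (z1 - z2) = 0"
    by (simp add: ip_n_eq_inner inner_diff_left diff_divide_distrib)
  then show "z1 = z2"
    by (simp add: ip_n_eq_inner)
qed

lemma proj_n_in_span: "proj_n S y \<in> span S"
  using theI'[OF ex1_proj_n] unfolding proj_n_def by blast

lemma proj_n_orthogonal: "s \<in> span S \<Longrightarrow> orthogonal (y - proj_n S y) s"
  using theI'[OF ex1_proj_n, of S y] unfolding proj_n_def ip_n_eq_0_iff_orthogonal by blast

lemma proj_n_unique: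
  assumes "z \<in> span S" and "\<And>s. s \<in> span S \<Longrightarrow> orthogonal (y - z) s"
  shows "proj_n S y = z"
  unfolding proj_n_def using assms
  by (intro the1_equality[OF ex1_proj_n]) (simp add: ip_n_eq_0_iff_orthogonal)

lemma proj_n_add: "proj_n S (a + b) = proj_n S a + proj_n S (b::real^'n)"
proof (rule proj_n_unique)
  show "proj_n S a + proj_n S b \<in> span S"
    by (simp add: proj_n_in_span span_add)
  fix s assume "s \<in> span S"
  then have "orthogonal ((a - proj_n S a) + (b - proj_n S b)) s"
    by (intro orthogonal_clauses(9) proj_n_orthogonal)
  then show "orthogonal (a + b - (proj_n S a + proj_n S b)) s"
    by (simp add: algebra_simps)
qed

lemma proj_n_nested_pythagorean:
  assumes "S \<subseteq> T"
  shows "(nrm_n (y - proj_n S y))\<^sup>2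
    = (nrm_n (y - proj_n T y))\<^sup>2 + (nrm_n (proj_n T y - proj_n S (y::real^'n)))\<^sup>2"
proof -
  have "proj_n T y - proj_n S y \<in> span T"
    using span_mono[OF assms] proj_n_in_span by (blast intro: span_diff)
  then have "orthogonal (y - proj_n T y) (proj_n T y - proj_n S y)"
    by (rule proj_n_orthogonal)
  then show ?thesis
    using nrm_n_pythagorean by fastforce
qed

text \<open>\<open>f + e - \<Pi>(f + e) = (f - \<Pi> f) + (e - \<Pi> e)\<close>, and \<open>\<Pi> e\<close> is orthogonal to both summands.\<close>
lemma proj_n_residual_expansion:
  fixes f e :: "real^'n" and S :: "(real^'n) set"
  defines "F \<equiv> proj_n S (f + e)"
  shows "(nrm_n (f + e - F))\<^sup>2 = (nrm_n (F - f))\<^sup>2 + (nrm_n e)\<^sup>2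
      + 2 * ip_n (f - proj_n S f) e - 2 * (nrm_n (proj_n S e))\<^sup>2"
    and "(nrm_n (proj_n S e))\<^sup>2 \<le> (nrm_n (F - f))\<^sup>2"
proof -
  define a p where "a = f - proj_n S f" and "p = proj_n S e"
  have F: "F = proj_n S f + p"
    unfolding F_def p_def by (rule proj_n_add)
  have "orthogonal a p" "orthogonal (e - p) p"
    unfolding a_def p_def by (simp_all add: proj_n_orthogonal proj_n_in_span)
  then have ap: "ip_n a p = 0" and ep: "ip_n (e - p) p = 0"
    by (simp_all add: ip_n_eq_0_iff_orthogonal)
  have pa: "ip_n p a = 0"
    using ap by (simp add: ip_n_commute)
  have noise: "(nrm_n e)\<^sup>2 = (nrm_n p)\<^sup>2 + (nrm_n (e - p))\<^sup>2"
    using ep by (simp add: nrm_n_power2 ip_n_diff_left ip_n_diff_right ip_n_commute)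
  have fit: "(nrm_n (F - f))\<^sup>2 = (nrm_n p)\<^sup>2 + (nrm_n a)\<^sup>2"
  proof -
    have "F - f = p - a" unfolding F a_def by simp
    then show ?thesis
      using ap pa by (simp add: nrm_n_power2 ip_n_diff_left ip_n_diff_right ip_n_commute)
  qed
  have residual: "f + e - F = a + (e - p)" unfolding F a_def by simp
  have "(nrm_n (f + e - F))\<^sup>2 = (nrm_n a)\<^sup>2 + 2 * ip_n a (e - p) + (nrm_n (e - p))\<^sup>2"
    unfolding residual by (simp add: nrm_n_power2 ip_n_add_left ip_n_add_right ip_n_commute)
  also have "ip_n a (e - p) = ip_n a e"
    using ap by (simp add: ip_n_diff_right)
  finally show "(nrm_n (f + e - F))\<^sup>2 = (nrm_n (F - f))\<^sup>2 + (nrm_n e)\<^sup>2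
      + 2 * ip_n (f - proj_n S f) e - 2 * (nrm_n (proj_n S e))\<^sup>2"
    using noise fit unfolding a_def p_def by simp
  show "(nrm_n (proj_n S e))\<^sup>2 \<le> (nrm_n (F - f))\<^sup>2"
    using fit unfolding p_def by simp
qed

lemma proj_n_residual_noise_gap:
  fixes f e :: "real^'n" and S :: "(real^'n) set"
  defines "F \<equiv> proj_n S (f + e)"
  shows "\<bar>(nrm_n (f + e - F))\<^sup>2 - (nrm_n e)\<^sup>2\<bar>
    \<le> (nrm_n (F - f))\<^sup>2 + 2 * \<bar>ip_n (f - proj_n S f) e\<bar>"
  using proj_n_residual_expansion[where S = S and f = f and e = e] unfolding F_def
  by (smt (verit) zero_le_power2)

lemma span_cols_UNIV:
  assumes "rank (X::real^'p^'n) = CARD('n)"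
  shows "span (cols X UNIV) = UNIV"
proof -
  have "cols X UNIV = columns X" unfolding cols_def columns_def by auto
  moreover have "dim (columns X) = DIM(real^'n)"
    using assms by (simp add: column_rank_def)
  ultimately show ?thesis by (metis dim_eq_full)
qed

lemma omp_r2_nested:
  "j \<le> k \<Longrightarrow> omp_r2 X Y sel j = omp_r2 X Y sel k + (nrm_n (omp_F X Y sel k - omp_F X Y sel j))\<^sup>2"
  unfolding omp_r2_def omp_F_def
  by (rule proj_n_nested_pythagorean) (auto simp: cols_def omp_J_def)

text \<open>If the selected column were already in the span, its correlation with the residual
  would vanish, hence by maximality all correlations would, and the residual would be
  orthogonal to \<open>\<real>\<^sup>n\<close>.\<close>
lemma omp_selects_new_column:
  fixes X :: "real^'p^'n"
  assumes span: "span (cols X UNIV) = UNIV" and sel: "omp_sel X Y sel"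
    and residual: "omp_F X Y sel m \<noteq> Y"
  shows "column (sel m) X \<notin> span (cols X (omp_J sel m))"
proof
  let ?R = "Y - omp_F X Y sel m"
  let ?normalized = "\<lambda>k. column k X /\<^sub>R nrm_n (column k X)"
  assume "column (sel m) X \<in> span (cols X (omp_J sel m))"
  then have "orthogonal ?R (column (sel m) X)"
    unfolding omp_F_def by (rule proj_n_orthogonal)
  then have "ip_n ?R (?normalized (sel m)) = 0"
    by (simp add: ip_n_eq_inner orthogonal_def)
  moreover have "\<bar>ip_n ?R (?normalized k)\<bar> \<le> \<bar>ip_n ?R (?normalized (sel m))\<bar>" for k
    using sel unfolding omp_sel_def by blast
  ultimately have "ip_n ?R (?normalized k) = 0" for k
    using abs_le_zero_iff by fastforce
  then have "orthogonal ?R (column k X)" for k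
    by (cases "column k X = 0") (auto simp: ip_n_eq_inner orthogonal_def nrm_n_eq_0_iff)
  then have "\<forall>x\<in>cols X UNIV. orthogonal ?R x"
    unfolding cols_def by blast
  then have "orthogonal ?R ?R"
    using orthogonal_to_span span by blast
  with residual show False
    by (simp add: orthogonal_def)
qed

lemma omp_residual_eventually_zero:
  fixes X :: "real^'p^'n"
  assumes span: "span (cols X UNIV) = UNIV" and sel: "omp_sel X Y sel"
  shows "\<exists>t. omp_F X Y sel t = Y"
proof (rule ccontr)
  assume "\<nexists>t. omp_F X Y sel t = Y"
  then have new: "column (sel m) X \<notin> span (cols X (omp_J sel m))" for m
    using omp_selects_new_column[OF span sel] by blast
  have "m \<le> dim (cols X (omp_J sel m))" for m
  proof (induction m)
    case (Suc m)
    have "cols X (omp_J sel (Suc m)) = insert (column (sel m) X) (cols X (omp_J sel m))"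
      unfolding cols_def omp_J_def by (simp add: lessThan_Suc)
    with Suc new show ?case by (simp add: dim_insert)
  qed simp
  from this[of "Suc CARD('n)"] show False
    using dim_subset_UNIV_cart[of "cols X (omp_J sel (Suc CARD('n)))"] by simp
qed

theorem lemma2p2:
  fixes X :: "real^'p^'n" and fstar eps :: "real^'n" and sel :: "nat \<Rightarrow> 'p"
    and \<kappa> :: real and m :: nat
  assumes "rank X = CARD('n)"
    and "omp_sel X (fstar + eps) sel"
    and "\<kappa> > 0"
  defines "Y \<equiv> fstar + eps"
    and "\<tau> \<equiv> (LEAST t. omp_r2 X (fstar + eps) sel t \<le> \<kappa>)"
  shows "(nrm_n (omp_F X Y sel \<tau> - omp_F X Y sel m))\<^sup>2
    \<le> (nrm_n (omp_F X Y sel m - fstar))\<^sup>2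
       + 2 * \<bar>ip_n (fstar - proj_n (cols X (omp_J sel m)) fstar) eps\<bar>
       + (if \<tau> < m then \<kappa> - (nrm_n eps)\<^sup>2 else 0)
       + (if \<tau> > m then (nrm_n eps)\<^sup>2
            + (omp_r2 X Y sel (\<tau> - 1) - omp_r2 X Y sel \<tau>) - \<kappa> else 0)"
proof -
  let ?F = "omp_F X Y sel" and ?r = "omp_r2 X Y sel"
  obtain t where "?F t = Y"
    using omp_residual_eventually_zero[OF span_cols_UNIV] assms(1,2) unfolding Y_def by blast
  with \<open>\<kappa> > 0\<close> have "?r t \<le> \<kappa>"
    by (simp add: omp_r2_def nrm_n_def ip_n_eq_inner)
  then have r_tau: "?r \<tau> \<le> \<kappa>"
    unfolding \<tau>_def Y_def by (rule LeastI)
  have r_before_tau: "\<tau> > 0 \<Longrightarrow> ?r (\<tau> - 1) > \<kappa>"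
    unfolding \<tau>_def Y_def by (metis diff_less less_numeral_extra(1) not_le not_less_Least)
  have gap: "\<bar>?r m - (nrm_n eps)\<^sup>2\<bar> \<le> (nrm_n (?F m - fstar))\<^sup>2
      + 2 * \<bar>ip_n (fstar - proj_n (cols X (omp_J sel m)) fstar) eps\<bar>"
    using proj_n_residual_noise_gap unfolding omp_r2_def omp_F_def Y_def by blast
  consider "\<tau> < m" | "\<tau> = m" | "\<tau> > m" by linarith
  then show ?thesis
  proof cases
    case 1
    then have "(nrm_n (?F \<tau> - ?F m))\<^sup>2 = ?r \<tau> - ?r m"
      using omp_r2_nested[of \<tau> m X Y sel] by (simp add: nrm_n_minus_commute)
    with 1 r_tau gap show ?thesis
      by (simp add: abs_le_iff)
  next
    case 2
    then show ?thesis by (simp add: nrm_n_def ip_n_eq_inner)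
  next
    case 3
    then have "(nrm_n (?F \<tau> - ?F m))\<^sup>2 = ?r m - ?r \<tau>"
      using omp_r2_nested[of m \<tau> X Y sel] by simp
    with 3 r_before_tau gap show ?thesis
      by (simp add: abs_le_iff)
  qed
qed

end
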